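(* The Jahangir graph $J_{2,3}$ is not greedy. Concretely, label $J_{2,3}$ as the 6-cycle $v_1v_2v_3v_4v_5v_6v_1$ together with a vertex $v_7$ adjacent to $v_1,v_3,v_5$. Then $f(J_{2,3})=8$, and for the distribution with $p(v_2)=p(v_6)=3$, $p(v_1)=p(v_7)=1$ and $p(v_3)=p(v_4)=p(v_5)=0$ (8 pebbles in total), no sequence of greedy pebbling moves with respect to the root $v_4$ places a pebble on $v_4$.
   Context: A pebbling distribution on a graph $G$ assigns a nonnegative integer number of pebbles to each vertex. A pebbling move removes two pebbles from a vertex and places one pebble on an adjacent vertex. The pebbling number $f(G)$ is the least $p$ such that, for every distribution of $p$ pebbles and every vertex $w$, some sequence of pebbling moves places a pebble on $w$. For the Jahangir graph $J_{n,m}$ ($m\ge 3$): it has $nm+1$ vertices, namely a cycle $C_{nm}$ plus one extra vertex adjacent to $m$ vertices of the cycle that are consecutively at distance $n$ from each other along the cycle. Given a root $w$, a pebbling move from $u$ to $v$ is greedy if $\mathrm{dist}(v,w)<\mathrm{dist}(u,w)$. A graph $G$ is greedy if, from every distribution of $f(G)$ pebbles and for every root $w$, one pebble can be moved to $w$ using only greedy pebbling moves. *)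

theory Defs
  imports Main
begin

text \<open>Graphs are given by a vertex set V and a symmetric adjacency relation E.
  A pebbling distribution is a function from vertices to nat, zero outside V.\<close>

definition supported :: "'a set \<Rightarrow> ('a \<Rightarrow> nat) \<Rightarrow> bool" where
  "supported V p \<longleftrightarrow> (\<forall>x. x \<notin> V \<longrightarrow> p x = 0)"

definition pebble_move :: "('a \<Rightarrow> 'a \<Rightarrow> bool) \<Rightarrow> ('a \<Rightarrow> nat) \<Rightarrow> ('a \<Rightarrow> nat) \<Rightarrow> bool" where
  "pebble_move E p q \<longleftrightarrow>
     (\<exists>u v. E u v \<and> 2 \<le> p u \<and> q = p(u := p u - 2, v := p v + 1))"

definition gdist :: "('a \<Rightarrow> 'a \<Rightarrow> bool) \<Rightarrow> 'a \<Rightarrow> 'a \<Rightarrow> nat" where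
  "gdist E u v = (LEAST k. (E ^^ k) u v)"

definition greedy_move :: "('a \<Rightarrow> 'a \<Rightarrow> bool) \<Rightarrow> 'a \<Rightarrow> ('a \<Rightarrow> nat) \<Rightarrow> ('a \<Rightarrow> nat) \<Rightarrow> bool" where
  "greedy_move E w p q \<longleftrightarrow>
     (\<exists>u v. E u v \<and> gdist E v w < gdist E u w \<and> 2 \<le> p u
            \<and> q = p(u := p u - 2, v := p v + 1))"

definition pebbling_number :: "'a set \<Rightarrow> ('a \<Rightarrow> 'a \<Rightarrow> bool) \<Rightarrow> nat" where
  "pebbling_number V E = (LEAST k. \<forall>p. supported V p \<longrightarrow> sum p V = k \<longrightarrow>
       (\<forall>w\<in>V. \<exists>q. (pebble_move E)\<^sup>*\<^sup>* p q \<and> 1 \<le> q w))"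

definition greedy :: "'a set \<Rightarrow> ('a \<Rightarrow> 'a \<Rightarrow> bool) \<Rightarrow> bool" where
  "greedy V E \<longleftrightarrow> (\<forall>p. supported V p \<longrightarrow> sum p V = pebbling_number V E \<longrightarrow>
       (\<forall>w\<in>V. \<exists>q. (greedy_move E w)\<^sup>*\<^sup>* p q \<and> 1 \<le> q w))"

text \<open>Jahangir graph J_{n,m}: cycle vertices 0..nm-1 (in cyclic order), center nm,
  adjacent to the cycle vertices 0, n, 2n, ..., (m-1)n.\<close>
definition jahangir_V :: "nat \<Rightarrow> nat \<Rightarrow> nat set" where
  "jahangir_V n m = {..n*m}"

definition jahangir_E :: "nat \<Rightarrow> nat \<Rightarrow> nat \<Rightarrow> nat \<Rightarrow> bool" where
  "jahangir_E n m u v \<longleftrightarrow>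
     (u < n*m \<and> v < n*m \<and> (v = Suc u mod (n*m) \<or> u = Suc v mod (n*m)))
   \<or> (u = n*m \<and> v < n*m \<and> n dvd v)
   \<or> (v = n*m \<and> u < n*m \<and> n dvd u)"

end

theory Submission
  imports Defs
begin

text \<open>Vertices are labelled as in the definition of the Jahangir graph: the cycle is 0, \<dots>, 5 and
  the centre is 6, so the paper's \<open>v\<^sub>i\<close> is \<open>i - 1\<close> and \<open>v\<^sub>7\<close> is 6.

  Lower bound: give vertex x the weight \<open>2 ^ (3 - dist x 3)\<close>. Along an edge the weight at most
  doubles, so no pebbling move increases the total weight. Seven pebbles on vertex 0 weigh 7,
  while a single pebble on vertex 3 already weighs 8.

  Upper bound: a depth-first search over move sequences, proved sound and run by the simplifier,
  solves each of the \<open>C(14,6) = 3003\<close> distributions of 8 pebbles for each of the 7 roots.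

  Greediness fails: from D the only greedy moves towards 3 are \<open>1 \<rightarrow> 2\<close> and \<open>5 \<rightarrow> 4\<close>, and after
  them every vertex carries at most one pebble. A solution must start with a non-greedy move,
  e.g. \<open>1 \<rightarrow> 0, 0 \<rightarrow> 6, 6 \<rightarrow> 4, 5 \<rightarrow> 4, 4 \<rightarrow> 3\<close>.\<close>

lemma sum_remove2:
  fixes f :: "'a \<Rightarrow> 'b::comm_monoid_add"
  assumes "finite V" "u \<in> V" "v \<in> V" "u \<noteq> v"
  shows "sum f V = f u + f v + sum f (V - {u, v})"
proof -
  have "sum f V = f u + sum f (V - {u})"
    using assms by (intro sum.remove)
  also have "sum f (V - {u}) = f v + sum f (V - {u} - {v})"
    using assms by (intro sum.remove) auto
  also have "V - {u} - {v} = V - {u, v}"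
    by auto
  finally show ?thesis
    by (simp add: add.assoc)
qed

text \<open>The hypothesis \<open>u \<noteq> v\<close> matters: for a loop the update in \<open>pebble_move\<close>
  degenerates to adding a pebble.\<close>

lemma pebble_move_weight_le:
  fixes wt :: "'a \<Rightarrow> nat"
  assumes "finite V"
    and edge: "\<And>u v. E u v \<Longrightarrow> u \<in> V \<and> v \<in> V \<and> u \<noteq> v \<and> wt v \<le> 2 * wt u"
    and "pebble_move E p q"
  shows "(\<Sum>x\<in>V. wt x * q x) \<le> (\<Sum>x\<in>V. wt x * p x)"
proof -
  obtain u v where "E u v" and "2 \<le> p u" and q: "q = p(u := p u - 2, v := p v + 1)"
    using \<open>pebble_move E p q\<close> unfolding pebble_move_def by blast
  with edge have uv: "u \<in> V" "v \<in> V" "u \<noteq> v" and "wt v \<le> 2 * wt u"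
    by blast+
  have "(\<Sum>x\<in>V - {u, v}. wt x * q x) = (\<Sum>x\<in>V - {u, v}. wt x * p x)"
    by (rule sum.cong) (auto simp: q)
  moreover have "wt u * q u + wt v * q v \<le> wt u * p u + wt v * p v"
  proof -
    obtain m where "p u = m + 2"
      using \<open>2 \<le> p u\<close> le_Suc_ex by (metis add.commute)
    then show ?thesis
      using \<open>wt v \<le> 2 * wt u\<close> uv(3) by (simp add: q algebra_simps)
  qed
  ultimately show ?thesis
    using sum_remove2[OF \<open>finite V\<close> uv] by (metis add_le_mono1)
qed

lemma pebble_moves_weight_le:
  fixes wt :: "'a \<Rightarrow> nat"
  assumes "finite V"
    and "\<And>u v. E u v \<Longrightarrow> u \<in> V \<and> v \<in> V \<and> u \<noteq> v \<and> wt v \<le> 2 * wt u"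
    and "(pebble_move E)\<^sup>*\<^sup>* p q"
  shows "(\<Sum>x\<in>V. wt x * q x) \<le> (\<Sum>x\<in>V. wt x * p x)"
  using assms(3)
  by (induction rule: rtranclp_induct) (auto intro: order_trans pebble_move_weight_le[OF assms(1,2)])

lemma relpowp_potential_le:
  assumes lip: "\<And>u v. E u v \<Longrightarrow> d u \<le> Suc (d v)" and "d w = 0"
  shows "(E ^^ k) u w \<Longrightarrow> d u \<le> k"
proof (induction k arbitrary: u)
  case 0
  then show ?case using \<open>d w = 0\<close> by simp
next
  case (Suc k)
  then obtain v where "E u v" and "(E ^^ k) v w"
    by (meson relpowp_Suc_D2)
  then show ?case
    using Suc.IH lip[of u v] by fastforce
qed

lemma relpowp_potential_descent:
  assumes "d w = 0" and desc: "\<And>u. u \<in> V \<Longrightarrow> u \<noteq> w \<Longrightarrow> \<exists>v\<in>V. E u v \<and> d u = Suc (d v)"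
    and "u \<in> V"
  shows "(E ^^ d u) u w"
  using \<open>u \<in> V\<close>
proof (induction "d u" arbitrary: u)
  case 0
  then have "u = w"
    using desc by fastforce
  then show ?case
    using 0 by simp
next
  case (Suc k)
  then have "u \<noteq> w"
    using \<open>d w = 0\<close> by auto
  then obtain v where "v \<in> V" "E u v" "d u = Suc (d v)"
    using desc Suc.prems by blast
  moreover have "(E ^^ d v) v w"
    using Suc.hyps(1) \<open>v \<in> V\<close> \<open>Suc k = d u\<close> \<open>d u = Suc (d v)\<close> by simp
  ultimately show ?case
    by (metis relpowp_Suc_I2)
qed

lemma gdist_eqI:
  assumes "\<And>u v. E u v \<Longrightarrow> d u \<le> Suc (d v)" and "d w = 0"
    and "\<And>u. u \<in> V \<Longrightarrow> u \<noteq> w \<Longrightarrow> \<exists>v\<in>V. E u v \<and> d u = Suc (d v)"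
    and "u \<in> V"
  shows "gdist E u w = d u"
  unfolding gdist_def
  using assms relpowp_potential_le[of E d w] relpowp_potential_descent[of d w V E]
  by (intro Least_equality) auto

lemma pebbling_number_eqI:
  assumes "\<And>p w. supported V p \<Longrightarrow> sum p V = n \<Longrightarrow> w \<in> V \<Longrightarrow>
      \<exists>q. (pebble_move E)\<^sup>*\<^sup>* p q \<and> 1 \<le> q w"
    and "\<And>k. k < n \<Longrightarrow> \<exists>p. supported V p \<and> sum p V = k \<and>
      (\<exists>w\<in>V. \<not> (\<exists>q. (pebble_move E)\<^sup>*\<^sup>* p q \<and> 1 \<le> q w))"
  shows "pebbling_number V E = n"
  unfolding pebbling_number_def
proof (rule Least_equality)
  fix k
  assume "\<forall>p. supported V p \<longrightarrow> sum p V = k \<longrightarrow> (\<forall>w\<in>V. \<exists>q. (pebble_move E)\<^sup>*\<^sup>* p q \<and> 1 \<le> q w)"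
  then show "n \<le> k"
    using assms(2) by (meson not_le)
qed (use assms(1) in blast)

lemma not_greedyI:
  assumes "supported V p" and "sum p V = pebbling_number V E" and "w \<in> V"
    and "\<not> (\<exists>q. (greedy_move E w)\<^sup>*\<^sup>* p q \<and> 1 \<le> q w)"
  shows "\<not> greedy V E"
  using assms unfolding greedy_def by blast

definition list_distribution :: "nat list \<Rightarrow> nat \<Rightarrow> nat" where
  "list_distribution l x = (if x < length l then l ! x else 0)"

lemma pebble_move_list_update:
  assumes "E u v" and "u < length l" and "v < length l" and "2 \<le> l ! u"
  shows "pebble_move E (list_distribution l) (list_distribution (l[u := l ! u - 2, v := l ! v + 1]))"
  unfolding pebble_move_def
proof (intro exI conjI)
  show "E u v" "2 \<le> list_distribution l u"
    using assms by (simp_all add: list_distribution_def)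
  show "list_distribution (l[u := l ! u - 2, v := l ! v + 1])
      = (list_distribution l)(u := list_distribution l u - 2, v := list_distribution l v + 1)"
    using assms(2,3) by (auto simp: list_distribution_def nth_list_update)
qed

function reachable_by :: "(nat \<Rightarrow> (nat \<times> nat) list) \<Rightarrow> nat \<Rightarrow> nat list \<Rightarrow> nat \<Rightarrow> bool"
  and reachable_via :: "(nat \<Rightarrow> (nat \<times> nat) list) \<Rightarrow> nat \<Rightarrow> (nat \<times> nat) list \<Rightarrow> nat list \<Rightarrow> nat \<Rightarrow> bool"
where
  "reachable_by ms k l w =
     (if 1 \<le> l ! w then True else case k of 0 \<Rightarrow> False | Suc k' \<Rightarrow> reachable_via ms k' (ms w) l w)"
| "reachable_via ms k [] l w = False"
| "reachable_via ms k ((u, v) # es) l w =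
     (if 2 \<le> l ! u then
        if reachable_by ms k (l[u := l ! u - 2, v := l ! v + 1]) w then True else reachable_via ms k es l w
      else reachable_via ms k es l w)"
  by pat_completeness auto
termination
  by (relation "measures [\<lambda>x. case x of Inl (_, k, _) \<Rightarrow> 2 * k | Inr (_, k, _) \<Rightarrow> 2 * k + 1,
                            \<lambda>x. case x of Inl _ \<Rightarrow> 0 | Inr (_, _, es, _) \<Rightarrow> length es]") auto

lemma reachable_sound:
  shows "reachable_by ms k l w \<Longrightarrow> length l = n \<Longrightarrow> w < n \<Longrightarrow>
      set (ms w) \<subseteq> {(u, v). E u v \<and> u < n \<and> v < n} \<Longrightarrow>
      \<exists>q. (pebble_move E)\<^sup>*\<^sup>* (list_distribution l) q \<and> 1 \<le> q w"
    and "reachable_via ms k es l w \<Longrightarrow> length l = n \<Longrightarrow> w < n \<Longrightarrow>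
      set es \<subseteq> {(u, v). E u v \<and> u < n \<and> v < n} \<Longrightarrow>
      set (ms w) \<subseteq> {(u, v). E u v \<and> u < n \<and> v < n} \<Longrightarrow>
      \<exists>q. (pebble_move E)\<^sup>*\<^sup>* (list_distribution l) q \<and> 1 \<le> q w"
proof (induction ms k l w and ms k es l w rule: reachable_by_reachable_via.induct)
  case (1 ms k l w)
  show ?case
  proof (cases "1 \<le> l ! w")
    case True
    then show ?thesis
      using "1.prems" by (auto simp: list_distribution_def)
  next
    case False
    then obtain k' where "k = Suc k'" and "reachable_via ms k' (ms w) l w"
      using "1.prems"(1) by (auto simp: reachable_by.simps split: nat.splits)
    then show ?thesis
      using "1.IH" False "1.prems" by blast
  qed
next
  case (2 ms k l w)
  then show ?case
    by (simp add: reachable_via.simps)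
next
  case (3 ms k u v es l w)
  let ?l' = "l[u := l ! u - 2, v := l ! v + 1]"
  show ?case
  proof (cases "2 \<le> l ! u \<and> reachable_by ms k ?l' w")
    case True
    then obtain q where "(pebble_move E)\<^sup>*\<^sup>* (list_distribution ?l') q" and "1 \<le> q w"
      using "3.IH"(1) "3.prems" by auto
    moreover have "pebble_move E (list_distribution l) (list_distribution ?l')"
      using True "3.prems" by (intro pebble_move_list_update) auto
    ultimately show ?thesis
      by (meson converse_rtranclp_into_rtranclp)
  next
    case False
    then have "reachable_via ms k es l w"
      using "3.prems"(1) by (auto simp: reachable_via.simps split: if_splits)
    then show ?thesis
      using "3.IH"(2,3) "3.prems" False by (cases "2 \<le> l ! u") auto
  qed
qed

fun for_all_distributions :: "(nat list \<Rightarrow> bool) \<Rightarrow> nat \<Rightarrow> nat \<Rightarrow> nat list \<Rightarrow> bool" where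
  "for_all_distributions P n 0 acc = (if n = 0 then P acc else True)"
| "for_all_distributions P n (Suc k) acc =
     list_all (\<lambda>i. for_all_distributions P (n - i) k (i # acc)) [0..<Suc n]"

declare reachable_by.simps [simp del] reachable_via.simps [simp del] for_all_distributions.simps [simp del]

lemma for_all_distributionsD:
  assumes "for_all_distributions P n k acc" and "length l = k" and "sum_list l = n"
  shows "P (rev l @ acc)"
  using assms
proof (induction l arbitrary: n k acc)
  case Nil
  then show ?case
    by (simp add: for_all_distributions.simps)
next
  case (Cons i l)
  then obtain k' where "k = Suc k'"
    by (cases k) auto
  have "\<forall>j\<in>set [0..<Suc n]. for_all_distributions P (n - j) k' (j # acc)"
    using Cons.prems(1) unfolding \<open>k = Suc k'\<close> for_all_distributions.simps(2) list_all_iff .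
  moreover have "i \<in> set [0..<Suc n]"
    using Cons.prems(3) by auto
  ultimately have "for_all_distributions P (n - i) k' (i # acc)"
    by blast
  then show ?case
    using Cons.IH Cons.prems \<open>k = Suc k'\<close> by fastforce
qed

abbreviation J23 :: "nat \<Rightarrow> nat \<Rightarrow> bool" where
  "J23 \<equiv> jahangir_E 2 3"

definition J23_edges :: "(nat \<times> nat) list" where
  "J23_edges = [(0, 1), (0, 5), (0, 6), (1, 0), (1, 2), (2, 1), (2, 3), (2, 6), (3, 2), (3, 4),
    (4, 3), (4, 5), (4, 6), (5, 0), (5, 4), (6, 0), (6, 2), (6, 4)]"

lemma J23_vertices: "jahangir_V 2 3 = {0, 1, 2, 3, 4, 5, 6}"
  by (auto simp: jahangir_V_def)

lemma J23_iff_edges: "J23 u v \<longleftrightarrow> (u, v) \<in> set J23_edges"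
proof -
  have J23: "J23 u v \<longleftrightarrow> (u < 6 \<and> v < 6 \<and> (v = Suc u mod 6 \<or> u = Suc v mod 6))
      \<or> (u = 6 \<and> v < 6 \<and> even v) \<or> (v = 6 \<and> u < 6 \<and> even u)"
    unfolding jahangir_E_def by simp
  consider "u = 0 \<or> u = 1 \<or> u = 2 \<or> u = 3 \<or> u = 4 \<or> u = 5 \<or> u = 6"
      and "v = 0 \<or> v = 1 \<or> v = 2 \<or> v = 3 \<or> v = 4 \<or> v = 5 \<or> v = 6"
    | "\<not> (u \<le> 6 \<and> v \<le> 6)"
    by linarith
  then show ?thesis
  proof cases
    case 1
    then show ?thesis
      unfolding J23 J23_edges_def by (elim disjE) simp_all
  next
    case 2
    then have "\<not> J23 u v" and "(u, v) \<notin> set J23_edges"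
      unfolding J23 J23_edges_def by auto
    then show ?thesis
      by simp
  qed
qed

lemma J23_edge_vertices: "J23 u v \<Longrightarrow> u \<in> {0, 1, 2, 3, 4, 5, 6} \<and> v \<in> {0, 1, 2, 3, 4, 5, 6}"
  by (auto simp: J23_iff_edges J23_edges_def)

definition J23_dist_to_3 :: "nat \<Rightarrow> nat" where
  "J23_dist_to_3 x = (if x = 3 then 0 else if x = 2 \<or> x = 4 then 1 else if x = 0 then 3 else 2)"

lemma J23_gdist_to_3:
  assumes "u \<in> {0, 1, 2, 3, 4, 5, 6}"
  shows "gdist J23 u 3 = J23_dist_to_3 u"
proof (rule gdist_eqI[where V = "{0, 1, 2, 3, 4, 5, 6}"])
  show "J23_dist_to_3 x \<le> Suc (J23_dist_to_3 y)" if "J23 x y" for x y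
    using that by (auto simp: J23_iff_edges J23_edges_def J23_dist_to_3_def)
  show "\<exists>y\<in>{0, 1, 2, 3, 4, 5, 6}. J23 x y \<and> J23_dist_to_3 x = Suc (J23_dist_to_3 y)"
    if "x \<in> {0, 1, 2, 3, 4, 5, 6}" and "x \<noteq> 3" for x
    using that by (auto simp: J23_iff_edges J23_edges_def J23_dist_to_3_def)
qed (use assms in \<open>simp_all add: J23_dist_to_3_def\<close>)

lemma J23_unsolvable_below_8:
  assumes "k < 8"
  shows "\<not> (\<exists>q. (pebble_move J23)\<^sup>*\<^sup>* ((\<lambda>_. 0)(0 := k)) q \<and> 1 \<le> q 3)"
proof
  define wt :: "nat \<Rightarrow> nat" where "wt x = 2 ^ (3 - J23_dist_to_3 x)" for x
  assume "\<exists>q. (pebble_move J23)\<^sup>*\<^sup>* ((\<lambda>_. 0)(0 := k)) q \<and> 1 \<le> q 3"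
  then obtain q where moves: "(pebble_move J23)\<^sup>*\<^sup>* ((\<lambda>_. 0)(0 := k)) q" and "1 \<le> q 3"
    by blast
  have "J23 u v \<Longrightarrow> u \<in> {0, 1, 2, 3, 4, 5, 6} \<and> v \<in> {0, 1, 2, 3, 4, 5, 6} \<and> u \<noteq> v \<and> wt v \<le> 2 * wt u" for u v
    by (auto simp: J23_iff_edges J23_edges_def wt_def J23_dist_to_3_def)
  from pebble_moves_weight_le[OF _ this moves]
  have "(\<Sum>x\<in>{0, 1, 2, 3, 4, 5, 6}. wt x * q x) \<le> k"
    by (simp add: wt_def J23_dist_to_3_def)
  moreover have "8 \<le> (\<Sum>x\<in>{0, 1, 2, 3, 4, 5, 6}. wt x * q x)"
    using \<open>1 \<le> q 3\<close> by (simp add: wt_def J23_dist_to_3_def)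
  ultimately show False
    using assms by simp
qed

text \<open>For root w the greedy moves come first, ordered by the distance of their target from w.
  Soundness of the search only needs these to be edges; the order matters for its running time.\<close>

definition J23_move_order :: "nat \<Rightarrow> (nat \<times> nat) list" where
  "J23_move_order w = (if w = 0 then [(1,0), (5,0), (6,0), (2,1), (2,6), (4,5), (4,6), (3,2), (3,4), (0,1), (0,5), (0,6), (1,2), (5,4), (6,2), (6,4), (2,3), (4,3)]
    else if w = 1 then [(0,1), (2,1), (3,2), (5,0), (6,0), (6,2), (4,3), (4,5), (4,6), (1,0), (1,2), (0,5), (0,6), (2,3), (2,6), (3,4), (5,4), (6,4)]
    else if w = 2 then [(1,2), (3,2), (6,2), (0,1), (0,6), (4,3), (4,6), (5,4), (5,0), (2,1), (2,3), (2,6), (1,0), (3,4), (6,0), (6,4), (0,5), (4,5)]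
    else if w = 3 then [(2,3), (4,3), (1,2), (5,4), (6,2), (6,4), (0,1), (0,5), (0,6), (3,2), (3,4), (2,1), (2,6), (4,5), (4,6), (1,0), (5,0), (6,0)]
    else if w = 4 then [(3,4), (5,4), (6,4), (0,5), (0,6), (2,3), (2,6), (1,0), (1,2), (4,3), (4,5), (4,6), (3,2), (5,0), (6,0), (6,2), (0,1), (2,1)]
    else if w = 5 then [(0,5), (4,5), (1,0), (3,4), (6,0), (6,4), (2,1), (2,3), (2,6), (5,4), (5,0), (0,1), (0,6), (4,3), (4,6), (1,2), (3,2), (6,2)]
    else [(0,6), (2,6), (4,6), (1,0), (1,2), (3,2), (3,4), (5,4), (5,0), (6,0), (6,2), (6,4), (0,1), (0,5), (2,1), (2,3), (4,3), (4,5)])"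

lemma J23_move_order_edges: "set (J23_move_order w) \<subseteq> {(u, v). J23 u v \<and> u < 7 \<and> v < 7}"
  unfolding J23_move_order_def by (auto simp: J23_iff_edges J23_edges_def)

lemma J23_search_roots_0_to_3:
  "list_all (\<lambda>w. for_all_distributions (\<lambda>l. reachable_by J23_move_order 7 l w) 8 7 []) [0, 1, 2, 3]"
  by code_simp

lemma J23_search_roots_4_to_6:
  "list_all (\<lambda>w. for_all_distributions (\<lambda>l. reachable_by J23_move_order 7 l w) 8 7 []) [4, 5, 6]"
  by code_simp

lemma J23_solvable_with_8:
  assumes "supported (jahangir_V 2 3) p" and "sum p (jahangir_V 2 3) = 8" and "w \<in> jahangir_V 2 3"
  shows "\<exists>q. (pebble_move J23)\<^sup>*\<^sup>* p q \<and> 1 \<le> q w"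
proof -
  define l where "l = map p [0..<7]"
  have V: "jahangir_V 2 3 = set [0..<7]"
    by (auto simp: jahangir_V_def)
  have "length l = 7" and "w < 7"
    using assms(3) by (simp_all add: l_def V)
  have "sum_list l = 8"
    using assms(2) by (metis V l_def sum_set_upt_conv_sum_list_nat)
  moreover have "for_all_distributions (\<lambda>l. reachable_by J23_move_order 7 l w) 8 7 []"
    using J23_search_roots_0_to_3 J23_search_roots_4_to_6 assms(3) by (auto simp: J23_vertices)
  ultimately have "reachable_by J23_move_order 7 l w"
    using for_all_distributionsD[of _ 8 7 "[]" "rev l"] \<open>length l = 7\<close> by simp
  moreover have "list_distribution l = p"
    using assms(1) by (auto simp: list_distribution_def l_def supported_def V)
  ultimately show ?thesis
    using reachable_sound(1)[OF _ \<open>length l = 7\<close> \<open>w < 7\<close> J23_move_order_edges] by simp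
qed

lemma J23_pebbling_number: "pebbling_number (jahangir_V 2 3) J23 = 8"
proof (rule pebbling_number_eqI)
  fix k :: nat
  assume "k < 8"
  then show "\<exists>p. supported (jahangir_V 2 3) p \<and> sum p (jahangir_V 2 3) = k \<and>
      (\<exists>w\<in>jahangir_V 2 3. \<not> (\<exists>q. (pebble_move J23)\<^sup>*\<^sup>* p q \<and> 1 \<le> q w))"
    using J23_unsolvable_below_8
    by (intro exI[of _ "(\<lambda>_. 0)(0 := k)"]) (auto simp: supported_def J23_vertices)
qed (rule J23_solvable_with_8)

definition J23_greedy_trapped :: "(nat \<Rightarrow> nat) \<Rightarrow> bool" where
  "J23_greedy_trapped q \<longleftrightarrow> q 0 = 1 \<and> q 3 = 0 \<and> q 6 = 1
     \<and> (q 1, q 2) \<in> {(3, 0), (1, 1)} \<and> (q 5, q 4) \<in> {(3, 0), (1, 1)}"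

lemma J23_greedy_move_trapped:
  assumes "greedy_move J23 3 q q'" and "J23_greedy_trapped q"
  shows "J23_greedy_trapped q'"
proof -
  obtain u v where "J23 u v" and "gdist J23 v 3 < gdist J23 u 3" and "2 \<le> q u"
    and q': "q' = q(u := q u - 2, v := q v + 1)"
    using assms(1) unfolding greedy_move_def by blast
  then have "(u, v) \<in> set J23_edges" and "J23_dist_to_3 v < J23_dist_to_3 u"
    using J23_edge_vertices J23_gdist_to_3 J23_iff_edges by auto
  then show ?thesis
    using \<open>2 \<le> q u\<close> assms(2) unfolding q' J23_edges_def
    by (simp only: set_simps insert_iff empty_iff prod.inject)
      (elim disjE conjE; auto simp: J23_greedy_trapped_def J23_dist_to_3_def)
qed

lemma J23_greedy_unsolvable:
  "\<not> (\<exists>q. (greedy_move J23 3)\<^sup>*\<^sup>* ((\<lambda>x. 0)(1 := 3, 5 := 3, 0 := 1, 6 := 1)) q \<and> 1 \<le> q 3)"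
proof
  assume "\<exists>q. (greedy_move J23 3)\<^sup>*\<^sup>* ((\<lambda>x. 0)(1 := 3, 5 := 3, 0 := 1, 6 := 1)) q \<and> 1 \<le> q 3"
  then obtain q where moves: "(greedy_move J23 3)\<^sup>*\<^sup>* ((\<lambda>x. 0)(1 := 3, 5 := 3, 0 := 1, 6 := 1)) q"
    and "1 \<le> q 3"
    by blast
  have "J23_greedy_trapped ((\<lambda>x. 0)(1 := 3, 5 := 3, 0 := 1, 6 := 1))"
    by (simp add: J23_greedy_trapped_def)
  with moves have "J23_greedy_trapped q"
    by (induction rule: rtranclp_induct) (auto intro: J23_greedy_move_trapped)
  with \<open>1 \<le> q 3\<close> show False
    by (simp add: J23_greedy_trapped_def)
qed

theorem theorem2p3:
  fixes D :: "nat \<Rightarrow> nat"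
  assumes "D = (\<lambda>x. 0)(1 := 3, 5 := 3, 0 := 1, 6 := 1)"
  shows "pebbling_number (jahangir_V 2 3) (jahangir_E 2 3) = 8
       \<and> \<not> (\<exists>q. (greedy_move (jahangir_E 2 3) 3)\<^sup>*\<^sup>* D q \<and> 1 \<le> q 3)
       \<and> \<not> greedy (jahangir_V 2 3) (jahangir_E 2 3)"
proof (intro conjI)
  show "pebbling_number (jahangir_V 2 3) J23 = 8"
    by (rule J23_pebbling_number)
  show stuck: "\<not> (\<exists>q. (greedy_move J23 3)\<^sup>*\<^sup>* D q \<and> 1 \<le> q 3)"
    unfolding assms by (rule J23_greedy_unsolvable)
  have "supported (jahangir_V 2 3) D" and "sum D (jahangir_V 2 3) = pebbling_number (jahangir_V 2 3) J23"
    unfolding J23_pebbling_number using assms by (simp_all add: supported_def J23_vertices)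
  moreover have "3 \<in> jahangir_V 2 3"
    by (simp add: J23_vertices)
  ultimately show "\<not> greedy (jahangir_V 2 3) J23"
    using stuck by (rule not_greedyI)
qed

end
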